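(* Let $\mathcal{H}$ be a real Hilbert space, $\rho\in\mathbb{R}$, and let $\mathcal{A}:\mathcal{H}\to 2^{\mathcal{H}}$ be a maximally $\rho$-comonotone operator. Let $\eta>\max\{-2\rho,0\}$ and let $x:\mathbb{R}\supseteq I\to\mathcal{H}$ be a differentiable function (such that $t\mapsto \mathcal{A}_\eta(x(t))$ is differentiable). Then $$\Big\langle \dot{x}(t), \frac{d}{dt}\mathcal{A}_{\eta}(x(t))\Big\rangle \geq 0 .$$
   Context: An operator $\mathcal{A}:\mathcal{H}\to 2^{\mathcal{H}}$ is $\rho$-comonotone if $\langle x-y,u-v\rangle\ge \rho\|u-v\|^2$ for all $(x,u),(y,v)$ in the graph $\mathrm{gra}\,\mathcal{A}=\{(x,u): u\in\mathcal{A}x\}$; it is maximally $\rho$-comonotone if it is $\rho$-comonotone and no other $\rho$-comonotone operator has a graph properly containing $\mathrm{gra}\,\mathcal{A}$. The resolvent of $\mathcal{A}$ with index $\eta>0$ is $J^{\mathcal{A}}_\eta=(\mathrm{Id}+\eta\mathcal{A})^{-1}$ and the Yosida regularization is $\mathcal{A}_\eta=\frac{1}{\eta}(\mathrm{Id}-J^{\mathcal{A}}_\eta)$. For $\mathcal{A}$ maximally $\rho$-comonotone and $\eta>\max\{-2\rho,0\}$, $J^{\mathcal{A}}_\eta$ and $\mathcal{A}_\eta$ are single-valued everywhere-defined operators $\mathcal{H}\to\mathcal{H}$. *)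

theory Defs
  imports "HOL-Analysis.Analysis"
begin

definition graph :: "('a \<Rightarrow> 'a set) \<Rightarrow> ('a \<times> 'a) set" where
  "graph A = {(x, u). u \<in> A x}"

definition comonotone :: "real \<Rightarrow> ('a::real_inner \<Rightarrow> 'a set) \<Rightarrow> bool" where
  "comonotone \<rho> A \<longleftrightarrow>
     (\<forall>x u y v. u \<in> A x \<longrightarrow> v \<in> A y \<longrightarrow> inner (x - y) (u - v) \<ge> \<rho> * (norm (u - v))\<^sup>2)"

definition max_comonotone :: "real \<Rightarrow> ('a::real_inner \<Rightarrow> 'a set) \<Rightarrow> bool" where
  "max_comonotone \<rho> A \<longleftrightarrow> comonotone \<rho> A \<and>
     (\<forall>B. comonotone \<rho> B \<longrightarrow> graph A \<subseteq> graph B \<longrightarrow> graph B = graph A)"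

text \<open>Resolvent J_\<eta> = (Id + \<eta>A)^{-1}, as a (single-valued) function:
  p = J x iff x \<in> p + \<eta> A p, i.e. (x - p)/\<eta> \<in> A p.\<close>

definition resolvent :: "('a::real_vector \<Rightarrow> 'a set) \<Rightarrow> real \<Rightarrow> 'a \<Rightarrow> 'a" where
  "resolvent A \<eta> x = (THE p. x \<in> (\<lambda>u. p + \<eta> *\<^sub>R u) ` A p)"

definition yosida :: "('a::real_vector \<Rightarrow> 'a set) \<Rightarrow> real \<Rightarrow> 'a \<Rightarrow> 'a" where
  "yosida A \<eta> x = (1 / \<eta>) *\<^sub>R (x - resolvent A \<eta> x)"

end

theory Submission
  imports Defs
begin

(* The Yosida regularization is (eta + rho)-cocoercive: writing z = J z + eta A_eta z with
   A_eta z in A (J z), where J is the resolvent, rho-comonotonicity of A gives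
   <z1 - z2, A_eta z1 - A_eta z2> >= (eta + rho) |A_eta z1 - A_eta z2|^2 >= 0.
   So the difference quotients of x and of A_eta o x have nonnegative inner product, and so do
   their limits.
   The substance is that the resolvent is well defined, i.e. Minty's theorem that Id + eta A is
   onto.  It follows from the Debrunner--Flor theorem: for a monotone set G there is x with
   <x - y, x + v> <= 0 for all (y, v) in G.  For finite G, x comes from maximizing a concave
   function over the convex hull of the points (y, v, <y, v>).  In general the solution sets are
   closed balls with the finite intersection property; instead of weak compactness, the
   parallelogram law makes near-minimal-norm points of nested closed convex sets converge. *)

section \<open>Directed families of closed convex sets\<close>

lemma convex_near_minimal_norm_diff:
  fixes C :: "'a::real_inner set"
  assumes "convex C" "x \<in> C" "y \<in> C" and lower: "\<forall>z\<in>C. d \<le> (norm z)\<^sup>2"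
    and "(norm x)\<^sup>2 \<le> d + e" "(norm y)\<^sup>2 \<le> d + e"
  shows "(norm (x - y))\<^sup>2 \<le> 4 * e"
proof -
  have "(1/2) *\<^sub>R x + (1/2) *\<^sub>R y \<in> C"
    using convexD[OF assms(1-3), of "1/2" "1/2"] by simp
  then have "d \<le> (norm ((1/2) *\<^sub>R (x + y)))\<^sup>2"
    using lower by (simp add: scaleR_add_right)
  then have "4 * d \<le> (norm (x + y))\<^sup>2"
    by (simp add: power_divide)
  moreover have "(norm (x - y))\<^sup>2 = 2 * (norm x)\<^sup>2 + 2 * (norm y)\<^sup>2 - (norm (x + y))\<^sup>2"
    by (simp add: power2_norm_eq_inner inner_diff_left inner_diff_right inner_add_left
        inner_add_right inner_commute)
  ultimately show ?thesis using assms(5,6) by linarith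
qed

lemma decseq_convex_near_minimal_norm_diff:
  fixes B :: "nat \<Rightarrow> 'a::real_inner set"
  assumes "decseq B" "\<forall>n. convex (B n)" and lower: "\<forall>n. \<forall>z\<in>B n. D - \<epsilon> n \<le> (norm z)\<^sup>2"
    and "decseq \<epsilon>" "n \<le> k"
    and x: "x \<in> B k" "(norm x)\<^sup>2 \<le> D + \<epsilon> k" and y: "y \<in> B n" "(norm y)\<^sup>2 \<le> D + \<epsilon> n"
  shows "(norm (x - y))\<^sup>2 \<le> 8 * \<epsilon> n"
proof -
  have "\<epsilon> k \<le> \<epsilon> n" "B k \<subseteq> B n"
    using \<open>decseq \<epsilon>\<close> \<open>decseq B\<close> \<open>n \<le> k\<close> by (simp_all add: decseq_def)
  then have "x \<in> B n" "(norm x)\<^sup>2 \<le> (D - \<epsilon> n) + 2 * \<epsilon> n"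
    "(norm y)\<^sup>2 \<le> (D - \<epsilon> n) + 2 * \<epsilon> n"
    using x y by auto
  then have "(norm (x - y))\<^sup>2 \<le> 4 * (2 * \<epsilon> n)"
    using assms(2) lower y(1) by (intro convex_near_minimal_norm_diff[of "B n"]) auto
  then show ?thesis by simp
qed

lemma directed_family_sup_inf_norm:
  fixes \<C> :: "'a::real_normed_vector set set"
  assumes nonempty: "{} \<notin> \<C>" and directed: "\<forall>C1\<in>\<C>. \<forall>C2\<in>\<C>. \<exists>C\<in>\<C>. C \<subseteq> C1 \<inter> C2"
    and "C0 \<in> \<C>" "bounded C0"
  obtains D where "\<And>e. 0 < e \<Longrightarrow> \<exists>C\<in>\<C>. \<forall>z\<in>C. D - e \<le> (norm z)\<^sup>2"
    and "\<And>C e. C \<in> \<C> \<Longrightarrow> 0 < e \<Longrightarrow> \<exists>x\<in>C. (norm x)\<^sup>2 < D + e"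
proof
  define m where "m C = Inf ((\<lambda>x. (norm x)\<^sup>2) ` C)" for C :: "'a set"
  obtain R where R: "\<forall>x\<in>C0. norm x \<le> R" using \<open>bounded C0\<close> bounded_iff by blast
  have bdd: "bdd_below ((\<lambda>x. (norm x)\<^sup>2) ` C)" for C :: "'a set"
    by (rule bdd_belowI[of _ 0]) auto
  have m_le: "m C \<le> (norm x)\<^sup>2" if "x \<in> C" for C x
    unfolding m_def using that bdd by (intro cInf_lower) auto
  have "m C \<le> R\<^sup>2" if C: "C \<in> \<C>" for C
  proof -
    obtain C' x where "C' \<in> \<C>" "C' \<subseteq> C \<inter> C0" "x \<in> C'"
      using directed C \<open>C0 \<in> \<C>\<close> nonempty by (metis all_not_in_conv)
    then have "x \<in> C" "norm x \<le> R" using R by auto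
    then show ?thesis using m_le[of x C] power_mono[of "norm x" R 2] by simp
  qed
  then have bdd_m: "bdd_above (m ` \<C>)" by (intro bdd_aboveI[of _ "R\<^sup>2"]) auto
  show "\<exists>C\<in>\<C>. \<forall>z\<in>C. Sup (m ` \<C>) - e \<le> (norm z)\<^sup>2" if e: "0 < e" for e
  proof -
    obtain C where "C \<in> \<C>" "Sup (m ` \<C>) - e < m C"
      using less_cSup_iff[OF _ bdd_m, of "Sup (m ` \<C>) - e"] e \<open>C0 \<in> \<C>\<close> by auto
    then show ?thesis using m_le by (meson less_le_trans less_imp_le)
  qed
  show "\<exists>x\<in>C. (norm x)\<^sup>2 < Sup (m ` \<C>) + e" if "C \<in> \<C>" "0 < e" for C e
  proof -
    have "m C < Sup (m ` \<C>) + e" using cSup_upper[OF _ bdd_m, of "m C"] that by simp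
    moreover have "(\<lambda>x. (norm x)\<^sup>2) ` C \<noteq> {}" using that nonempty by auto
    ultimately show ?thesis by (simp add: m_def cInf_less_iff bdd)
  qed
qed

lemma directed_family_minimizing_chain:
  fixes \<C> :: "'a::real_normed_vector set set"
  assumes "{} \<notin> \<C>" and directed: "\<forall>C1\<in>\<C>. \<forall>C2\<in>\<C>. \<exists>C\<in>\<C>. C \<subseteq> C1 \<inter> C2"
    and "C0 \<in> \<C>" "bounded C0" and "\<forall>n. 0 < \<epsilon> n"
  obtains D B where "\<forall>n. B n \<in> \<C>" "decseq B" "\<forall>n. \<forall>z\<in>B n. D - \<epsilon> n \<le> (norm z)\<^sup>2"
    "\<forall>C\<in>\<C>. \<forall>n. \<exists>x\<in>C \<inter> B n. (norm x)\<^sup>2 < D + \<epsilon> n"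
proof -
  obtain D where lower: "\<And>e. 0 < e \<Longrightarrow> \<exists>C\<in>\<C>. \<forall>z\<in>C. D - e \<le> (norm z)\<^sup>2"
    and upper: "\<And>C e. C \<in> \<C> \<Longrightarrow> 0 < e \<Longrightarrow> \<exists>x\<in>C. (norm x)\<^sup>2 < D + e"
    using directed_family_sup_inf_norm[OF assms(1-4)] by blast
  have "\<forall>n. \<exists>C\<in>\<C>. \<forall>z\<in>C. D - \<epsilon> n \<le> (norm z)\<^sup>2" using lower assms(5) by blast
  then obtain A where A: "\<forall>n. A n \<in> \<C> \<and> (\<forall>z\<in>A n. D - \<epsilon> n \<le> (norm z)\<^sup>2)" by metis
  obtain B where B: "\<forall>n. (B n \<in> \<C> \<and> B n \<subseteq> A n) \<and> B (Suc n) \<subseteq> B n"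
  proof (atomize_elim, rule dependent_nat_choice)
    show "\<exists>C. C \<in> \<C> \<and> C \<subseteq> A 0" using A by blast
    show "\<exists>C'. (C' \<in> \<C> \<and> C' \<subseteq> A (Suc n)) \<and> C' \<subseteq> C" if "C \<in> \<C> \<and> C \<subseteq> A n" for C n
      using that A directed by (metis le_inf_iff)
  qed
  show ?thesis
  proof
    show "\<forall>n. B n \<in> \<C>" "decseq B" using B by (auto intro: decseq_SucI)
    show "\<forall>n. \<forall>z\<in>B n. D - \<epsilon> n \<le> (norm z)\<^sup>2" using A B by blast
    show "\<forall>C\<in>\<C>. \<forall>n. \<exists>x\<in>C \<inter> B n. (norm x)\<^sup>2 < D + \<epsilon> n"
      using B directed upper assms(5) by (meson in_mono)
  qed
qed

lemma Cauchy_if_dist_le_null: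
  fixes p :: "nat \<Rightarrow> 'a::metric_space"
  assumes "\<And>n k. n \<le> k \<Longrightarrow> dist (p k) (p n) \<le> \<delta> n" and "\<delta> \<longlonglongrightarrow> 0"
  shows "Cauchy p"
  unfolding Cauchy_altdef2
proof (intro allI impI)
  fix e :: real assume "0 < e"
  then obtain N where "\<bar>\<delta> N\<bar> < e"
    using assms(2) by (auto simp: LIMSEQ_iff dest!: spec[of _ e])
  then have "\<delta> N < e" by simp
  then show "\<exists>N. \<forall>n\<ge>N. dist (p n) (p N) < e"
    using assms(1) by (meson le_less_trans)
qed

lemma LIMSEQ_if_dist_le_null:
  fixes p q :: "nat \<Rightarrow> 'a::real_normed_vector"
  assumes "p \<longlonglongrightarrow> l" and "\<And>n. dist (q n) (p n) \<le> \<delta> n" and "\<delta> \<longlonglongrightarrow> 0"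
  shows "q \<longlonglongrightarrow> l"
proof -
  have "(\<lambda>n. q n - p n) \<longlonglongrightarrow> 0"
    by (rule Lim_null_comparison[OF always_eventually assms(3)])
      (use assms(2) in \<open>simp add: dist_norm\<close>)
  with assms(1) show ?thesis by (rule Lim_transform)
qed

lemma directed_closed_convex_Inter_nonempty:
  fixes \<C> :: "'a::{real_inner, complete_space} set set"
  assumes closed: "\<forall>C\<in>\<C>. closed C" and convex: "\<forall>C\<in>\<C>. convex C" and "{} \<notin> \<C>"
    and directed: "\<forall>C1\<in>\<C>. \<forall>C2\<in>\<C>. \<exists>C\<in>\<C>. C \<subseteq> C1 \<inter> C2"
    and "C0 \<in> \<C>" "bounded C0"
  shows "\<Inter>\<C> \<noteq> {}"
proof -
  define \<delta> where "\<delta> n = inverse (real (Suc n))" for n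
  have \<delta>_pos: "0 < \<delta> n" for n by (simp add: \<delta>_def)
  have "decseq (\<lambda>n. (\<delta> n)\<^sup>2 / 8)"
    by (intro decseq_SucI divide_right_mono power_mono) (simp_all add: \<delta>_def frac_le)
  have \<epsilon>_pos: "\<forall>n. 0 < (\<delta> n)\<^sup>2 / 8" by (simp add: \<delta>_def)
  obtain D B where B: "\<forall>n. B n \<in> \<C>" "decseq B"
    and lower: "\<forall>n. \<forall>z\<in>B n. D - (\<delta> n)\<^sup>2 / 8 \<le> (norm z)\<^sup>2"
    and near: "\<forall>C\<in>\<C>. \<forall>n. \<exists>x\<in>C \<inter> B n. (norm x)\<^sup>2 < D + (\<delta> n)\<^sup>2 / 8"
    by (rule directed_family_minimizing_chain[OF assms(3-6) \<epsilon>_pos])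
  have close: "dist x y \<le> \<delta> n"
    if "n \<le> k" "x \<in> B k" "(norm x)\<^sup>2 < D + (\<delta> k)\<^sup>2 / 8" "y \<in> B n" "(norm y)\<^sup>2 < D + (\<delta> n)\<^sup>2 / 8"
    for x y n k
  proof -
    have "(norm (x - y))\<^sup>2 \<le> 8 * ((\<delta> n)\<^sup>2 / 8)"
      using that convex B lower \<open>decseq (\<lambda>n. (\<delta> n)\<^sup>2 / 8)\<close>
      by (intro decseq_convex_near_minimal_norm_diff[of B]) auto
    then show ?thesis
      using \<delta>_pos[of n] power2_le_imp_le by (fastforce simp: dist_norm)
  qed
  have "\<forall>n. \<exists>x. x \<in> B n \<and> (norm x)\<^sup>2 < D + (\<delta> n)\<^sup>2 / 8" using near B by blast
  then obtain p where p: "\<forall>n. p n \<in> B n \<and> (norm (p n))\<^sup>2 < D + (\<delta> n)\<^sup>2 / 8" by metis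
  have \<delta>_lim: "\<delta> \<longlonglongrightarrow> 0" unfolding \<delta>_def by (rule LIMSEQ_inverse_real_of_nat)
  have "Cauchy p"
    using close p by (intro Cauchy_if_dist_le_null[OF _ \<delta>_lim]) blast
  then obtain l where l: "p \<longlonglongrightarrow> l" using Cauchy_convergent_iff convergent_def by blast
  have "l \<in> C" if C: "C \<in> \<C>" for C
  proof -
    have "\<forall>n. \<exists>x. x \<in> C \<inter> B n \<and> (norm x)\<^sup>2 < D + (\<delta> n)\<^sup>2 / 8" using near C by blast
    then obtain q where q: "\<forall>n. q n \<in> C \<inter> B n \<and> (norm (q n))\<^sup>2 < D + (\<delta> n)\<^sup>2 / 8"
      by metis
    have "dist (q n) (p n) \<le> \<delta> n" for n
      using close[of n n "q n" "p n"] q p by blast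
    then have "q \<longlonglongrightarrow> l" by (rule LIMSEQ_if_dist_le_null[OF l _ \<delta>_lim])
    then show ?thesis using q closed C by (meson IntD1 closed_sequentially)
  qed
  then show ?thesis by blast
qed

section \<open>The Debrunner--Flor theorem\<close>

definition monotone_graph :: "('a::real_inner \<times> 'a) set \<Rightarrow> bool" where
  "monotone_graph G \<longleftrightarrow>
     (\<forall>y1 v1 y2 v2. (y1, v1) \<in> G \<longrightarrow> (y2, v2) \<in> G \<longrightarrow> 0 \<le> inner (y1 - y2) (v1 - v2))"

lemma inner_convex_comb_le_of_monotone:
  fixes f g :: "'b \<Rightarrow> 'a::real_inner"
  assumes "finite Q" and u: "\<forall>i\<in>Q. 0 \<le> u i" "sum u Q = 1"
    and mono: "\<forall>i\<in>Q. \<forall>j\<in>Q. 0 \<le> inner (f i - f j) (g i - g j)"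
  shows "inner (\<Sum>i\<in>Q. u i *\<^sub>R f i) (\<Sum>i\<in>Q. u i *\<^sub>R g i) \<le> (\<Sum>i\<in>Q. u i * inner (f i) (g i))"
proof -
  let ?F = "\<Sum>i\<in>Q. u i *\<^sub>R f i" and ?G = "\<Sum>i\<in>Q. u i *\<^sub>R g i"
    and ?M = "\<Sum>i\<in>Q. u i * inner (f i) (g i)"
  have diag: "(\<Sum>i\<in>Q. \<Sum>j\<in>Q. u i * u j * inner (f i) (g i)) = ?M"
    by (simp add: sum_distrib_left[symmetric] sum_distrib_right[symmetric] u
        mult.commute mult.left_commute)
  have diag': "(\<Sum>i\<in>Q. \<Sum>j\<in>Q. u i * u j * inner (f j) (g j)) = ?M"
    by (subst sum.swap) (simp add: sum_distrib_left[symmetric] sum_distrib_right[symmetric] u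
        mult.commute mult.left_commute)
  have cross: "(\<Sum>i\<in>Q. \<Sum>j\<in>Q. u i * u j * inner (f i) (g j)) = inner ?F ?G"
    by (simp add: inner_sum_left inner_sum_right sum_distrib_left mult.assoc)
      (subst sum.swap, simp add: mult.left_commute)
  have cross': "(\<Sum>i\<in>Q. \<Sum>j\<in>Q. u i * u j * inner (f j) (g i)) = inner ?F ?G"
    by (simp add: inner_sum_left inner_sum_right sum_distrib_left mult.assoc)
  have "0 \<le> (\<Sum>i\<in>Q. \<Sum>j\<in>Q. u i * u j * inner (f i - f j) (g i - g j))"
    using u mono by (intro sum_nonneg) simp
  also have "\<dots> = 2 * ?M - 2 * inner ?F ?G"
    by (simp add: inner_diff_left inner_diff_right ring_distribs sum.distrib sum_subtractf
        diag diag' cross cross')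
  finally show ?thesis by simp
qed

lemma convex_hull_lift_inner_le:
  assumes "finite G" "monotone_graph G"
    and "(Y, V, S) \<in> convex hull ((\<lambda>(y, v). (y, v, inner y v)) ` G)"
  shows "inner Y V \<le> S"
proof -
  define P where "P = (\<lambda>(y, v). (y, v, inner y v)) ` G"
  have "finite P" using assms(1) by (simp add: P_def)
  then obtain u where u: "\<forall>q\<in>P. 0 \<le> u q" "sum u P = 1"
    and Q: "(\<Sum>q\<in>P. u q *\<^sub>R q) = (Y, V, S)"
    using assms(3) unfolding P_def[symmetric] convex_hull_finite[OF \<open>finite P\<close>] by blast
  have "Y = (\<Sum>q\<in>P. u q *\<^sub>R fst q)" "V = (\<Sum>q\<in>P. u q *\<^sub>R fst (snd q))"
    "S = (\<Sum>q\<in>P. u q * snd (snd q))"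
    using arg_cong[OF Q, of fst] arg_cong[OF Q, of "fst \<circ> snd"] arg_cong[OF Q, of "snd \<circ> snd"]
    by (simp_all add: fst_sum snd_sum)
  moreover have "(\<Sum>q\<in>P. u q * snd (snd q)) = (\<Sum>q\<in>P. u q * inner (fst q) (fst (snd q)))"
    by (rule sum.cong) (auto simp: P_def)
  moreover have "\<forall>i\<in>P. \<forall>j\<in>P. 0 \<le> inner (fst i - fst j) (fst (snd i) - fst (snd j))"
    using assms(2) by (auto simp: P_def monotone_graph_def)
  ultimately show ?thesis
    using inner_convex_comb_le_of_monotone[OF \<open>finite P\<close> u] by simp
qed

(* lifted_potential (Y, V, S) is the minimum over z of |z|^2 + <z, V - Y> - S, attained at
   z = (Y - V)/2; the minimized function is affine in (Y, V, S). *)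
definition lifted_potential :: "'a::real_inner \<times> 'a \<times> real \<Rightarrow> real" where
  "lifted_potential q = - (norm ((1/2) *\<^sub>R (fst q - fst (snd q))))\<^sup>2 - snd (snd q)"

lemma lifted_potential_segment:
  fixes Q :: "'a::real_inner \<times> 'a \<times> real" and y v :: 'a and t :: real
  defines "x \<equiv> (1/2) *\<^sub>R ((1 - t) *\<^sub>R (fst Q - fst (snd Q)) + t *\<^sub>R (y - v))"
  assumes "t \<le> 1"
  shows "(1 - t) * lifted_potential Q + t * inner (x - y) (x + v)
    \<le> lifted_potential ((1 - t) *\<^sub>R Q + t *\<^sub>R (y, v, inner y v))"
proof -
  define q where "q = (1 - t) *\<^sub>R Q + t *\<^sub>R (y, v, inner y v)"
  define \<Lambda> where "\<Lambda> p z = (norm z)\<^sup>2 + inner z (fst (snd p) - fst p) - snd (snd p)"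
    for p :: "'a \<times> 'a \<times> real" and z
  have \<Lambda>_min: "lifted_potential p \<le> \<Lambda> p z" for p z
  proof -
    have "\<Lambda> p z - lifted_potential p = (norm (z - (1/2) *\<^sub>R (fst p - fst (snd p))))\<^sup>2"
      by (simp add: \<Lambda>_def lifted_potential_def power2_norm_eq_inner inner_diff_left
          inner_diff_right inner_commute algebra_simps)
    then show ?thesis by (metis diff_ge_0_iff_ge zero_le_power2)
  qed
  have \<Lambda>_center: "\<Lambda> p ((1/2) *\<^sub>R (fst p - fst (snd p))) = lifted_potential p" for p
    by (simp add: \<Lambda>_def lifted_potential_def power2_norm_eq_inner inner_diff_left
        inner_diff_right algebra_simps)
  have "x = (1/2) *\<^sub>R (fst q - fst (snd q))" by (simp add: x_def q_def algebra_simps)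
  then have "lifted_potential q = \<Lambda> q x" by (simp only: \<Lambda>_center)
  moreover have "\<Lambda> q x = (1 - t) * \<Lambda> Q x + t * \<Lambda> (y, v, inner y v) x"
    by (simp add: \<Lambda>_def q_def inner_diff_right inner_add_right algebra_simps)
  moreover have "\<Lambda> (y, v, inner y v) x = inner (x - y) (x + v)"
    by (simp add: \<Lambda>_def power2_norm_eq_inner inner_diff_left inner_diff_right
        inner_add_left inner_add_right inner_commute)
  moreover have "(1 - t) * lifted_potential Q \<le> (1 - t) * \<Lambda> Q x"
    using \<Lambda>_min \<open>t \<le> 1\<close> by (simp add: mult_left_mono)
  ultimately show ?thesis by (simp add: q_def)
qed

lemma inner_le_lifted_potential_at_maximizer:
  fixes K :: "('a::real_inner \<times> 'a \<times> real) set" and Q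
  defines "x \<equiv> (1/2) *\<^sub>R (fst Q - fst (snd Q))"
  assumes "convex K" "Q \<in> K" "(y, v, inner y v) \<in> K"
    and max: "\<forall>q\<in>K. lifted_potential q \<le> lifted_potential Q"
  shows "inner (x - y) (x + v) \<le> lifted_potential Q"
proof -
  define q where "q t = (1 - t) *\<^sub>R Q + t *\<^sub>R (y, v, inner y v)" for t
  define x' where "x' t = (1/2) *\<^sub>R ((1 - t) *\<^sub>R (fst Q - fst (snd Q)) + t *\<^sub>R (y - v))" for t
  define \<phi> where "\<phi> t = inner (x' t - y) (x' t + v)" for t
  have "\<phi> t \<le> lifted_potential Q" if "0 < t" "t \<le> 1" for t
  proof -
    have "q t \<in> K" using convexD_alt[OF assms(2-4)] that by (simp add: q_def)
    then have "lifted_potential (q t) \<le> lifted_potential Q" using max by blast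
    moreover have "(1 - t) * lifted_potential Q + t * \<phi> t \<le> lifted_potential (q t)"
      unfolding \<phi>_def x'_def q_def by (rule lifted_potential_segment[OF \<open>t \<le> 1\<close>])
    ultimately have "t * \<phi> t \<le> t * lifted_potential Q" by (simp add: algebra_simps)
    then show ?thesis using \<open>0 < t\<close> by simp
  qed
  then have "\<forall>\<^sub>F t in at_right 0. \<phi> t \<le> lifted_potential Q"
    unfolding eventually_at_right_field by (intro exI[of _ 1]) auto
  moreover have "(\<phi> \<longlongrightarrow> \<phi> 0) (at_right 0)"
    unfolding \<phi>_def x'_def by (intro tendsto_intros)
  ultimately have "\<phi> 0 \<le> lifted_potential Q" by (simp add: tendsto_upperbound)
  then show ?thesis by (simp add: \<phi>_def x'_def x_def)
qed

lemma debrunner_flor_finite: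
  assumes "finite G" "monotone_graph G"
  shows "\<exists>x. \<forall>(y, v)\<in>G. inner (x - y) (x + v) \<le> 0"
proof (cases "G = {}")
  case False
  define K where "K = convex hull ((\<lambda>(y, v). (y, v, inner y v)) ` G)"
  have "compact K" "K \<noteq> {}"
    using \<open>finite G\<close> False by (simp_all add: K_def finite_imp_compact_convex_hull)
  moreover have "continuous_on K lifted_potential"
    unfolding lifted_potential_def by (intro continuous_intros)
  ultimately obtain Q where "Q \<in> K" and max: "\<forall>q\<in>K. lifted_potential q \<le> lifted_potential Q"
    using continuous_attains_sup by metis
  obtain Y V S where Q: "Q = (Y, V, S)" by (cases Q)
  have "inner Y V \<le> S"
    using convex_hull_lift_inner_le[OF assms] \<open>Q \<in> K\<close> by (simp add: K_def Q)
  moreover have "(norm ((1/2) *\<^sub>R (Y - V)))\<^sup>2 + inner Y V = (norm ((1/2) *\<^sub>R (Y + V)))\<^sup>2"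
    by (simp add: power2_norm_eq_inner inner_diff_left inner_diff_right inner_add_left
        inner_add_right inner_commute field_simps)
  ultimately have "lifted_potential Q \<le> 0"
    by (simp add: lifted_potential_def Q) (smt (verit) zero_le_power2)
  moreover have "inner ((1/2) *\<^sub>R (Y - V) - y) ((1/2) *\<^sub>R (Y - V) + v) \<le> lifted_potential Q"
    if "(y, v) \<in> G" for y v
  proof -
    have "(y, v, inner y v) \<in> K" using that hull_subset[of _ convex] by (force simp: K_def)
    with \<open>Q \<in> K\<close> max show ?thesis
      using inner_le_lifted_potential_at_maximizer[of K Q] by (simp add: K_def Q)
  qed
  ultimately show ?thesis by (intro exI[of _ "(1/2) *\<^sub>R (Y - V)"]) fastforce
qed simp

lemma
  fixes H :: "('a::real_inner \<times> 'a) set"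
  shows closed_inner_diff_add_le_0: "closed {x. \<forall>(y, v)\<in>H. inner (x - y) (x + v) \<le> 0}"
    and convex_inner_diff_add_le_0: "convex {x. \<forall>(y, v)\<in>H. inner (x - y) (x + v) \<le> 0}"
    and bounded_inner_diff_add_le_0: "H \<noteq> {} \<Longrightarrow> bounded {x. \<forall>(y, v)\<in>H. inner (x - y) (x + v) \<le> 0}"
proof -
  have "inner (x - y) (x + v) = (dist ((1/2) *\<^sub>R (y - v)) x)\<^sup>2 - (norm ((1/2) *\<^sub>R (y + v)))\<^sup>2"
    for x y v :: 'a
    by (simp add: dist_norm power2_norm_eq_inner inner_diff_left inner_diff_right inner_add_left
        inner_add_right inner_commute algebra_simps)
  then have cball: "{x. \<forall>(y, v)\<in>H. inner (x - y) (x + v) \<le> 0}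
      = (\<Inter>(y, v)\<in>H. cball ((1/2) *\<^sub>R (y - v)) (norm ((1/2) *\<^sub>R (y + v))))"
    by (auto simp: abs_le_square_iff[symmetric])
  show "closed {x. \<forall>(y, v)\<in>H. inner (x - y) (x + v) \<le> 0}"
    "convex {x. \<forall>(y, v)\<in>H. inner (x - y) (x + v) \<le> 0}"
    unfolding cball by (intro closed_INT convex_INT ballI; simp add: split_beta)+
  show "bounded {x. \<forall>(y, v)\<in>H. inner (x - y) (x + v) \<le> 0}" if H: "H \<noteq> {}"
  proof -
    obtain g where "g \<in> H" using H by blast
    obtain y v where "(y, v) \<in> H" using \<open>g \<in> H\<close> by (cases g) blast
    then have "(\<Inter>(y, v)\<in>H. cball ((1/2) *\<^sub>R (y - v)) (norm ((1/2) *\<^sub>R (y + v))))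
        \<subseteq> cball ((1/2) *\<^sub>R (y - v)) (norm ((1/2) *\<^sub>R (y + v)))"
      by auto
    then show ?thesis unfolding cball by (rule bounded_subset[OF bounded_cball])
  qed
qed

lemma debrunner_flor:
  fixes G :: "('a::{real_inner, complete_space} \<times> 'a) set"
  assumes "monotone_graph G"
  shows "\<exists>x. \<forall>(y, v)\<in>G. inner (x - y) (x + v) \<le> 0"
proof (cases "G = {}")
  case False
  then obtain g0 where "g0 \<in> G" by blast
  define B where "B H = {x. \<forall>(y, v)\<in>H. inner (x - y) (x + v) \<le> 0}" for H :: "('a \<times> 'a) set"
  define \<C> where "\<C> = B ` {H. finite H \<and> g0 \<in> H \<and> H \<subseteq> G}"
  have "\<Inter>\<C> \<noteq> {}"
  proof (rule directed_closed_convex_Inter_nonempty)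
    show "\<forall>C\<in>\<C>. closed C" "\<forall>C\<in>\<C>. convex C"
      by (auto simp: \<C>_def B_def closed_inner_diff_add_le_0 convex_inner_diff_add_le_0)
    show "bounded (B {g0})" using bounded_inner_diff_add_le_0[of "{g0}"] by (simp add: B_def)
    have "B H \<noteq> {}" if "finite H" "H \<subseteq> G" for H
      using debrunner_flor_finite[OF that(1)] assms that(2)
      unfolding B_def monotone_graph_def by blast
    then show "{} \<notin> \<C>" by (auto simp: \<C>_def)
    show "\<forall>C1\<in>\<C>. \<forall>C2\<in>\<C>. \<exists>C\<in>\<C>. C \<subseteq> C1 \<inter> C2"
    proof (intro ballI)
      fix C1 C2 assume "C1 \<in> \<C>" "C2 \<in> \<C>"
      then obtain H1 H2 where "C1 = B H1" "C2 = B H2" "H1 \<in> {H. finite H \<and> g0 \<in> H \<and> H \<subseteq> G}"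
        "H2 \<in> {H. finite H \<and> g0 \<in> H \<and> H \<subseteq> G}"
        unfolding \<C>_def by blast
      then show "\<exists>C\<in>\<C>. C \<subseteq> C1 \<inter> C2"
        unfolding \<C>_def by (intro bexI[of _ "B (H1 \<union> H2)"] imageI) (auto simp: B_def)
    qed
    show "B {g0} \<in> \<C>" using \<open>g0 \<in> G\<close> by (simp add: \<C>_def)
  qed
  moreover have "\<Inter>\<C> \<subseteq> B G"
  proof
    fix x assume x: "x \<in> \<Inter>\<C>"
    have "x \<in> B {g0, g}" if "g \<in> G" for g
      using x that \<open>g0 \<in> G\<close> unfolding \<C>_def by blast
    then show "x \<in> B G" by (auto simp: B_def)
  qed
  ultimately obtain x where "x \<in> B G" by blast
  then show ?thesis unfolding B_def by blast
qed simp

section \<open>Resolvent and Yosida regularization of comonotone operators\<close>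

lemma comonotoneD:
  "comonotone \<rho> A \<Longrightarrow> u \<in> A x \<Longrightarrow> v \<in> A y \<Longrightarrow> \<rho> * (norm (u - v))\<^sup>2 \<le> inner (x - y) (u - v)"
  unfolding comonotone_def by blast

lemma max_comonotone_mem_if_related:
  assumes max: "max_comonotone \<rho> A"
    and related: "\<And>y v. v \<in> A y \<Longrightarrow> \<rho> * (norm (u - v))\<^sup>2 \<le> inner (p - y) (u - v)"
  shows "u \<in> A p"
proof -
  define B where "B x = (if x = p then insert u (A x) else A x)" for x
  have "comonotone \<rho> A" using max by (simp add: max_comonotone_def)
  have "comonotone \<rho> B"
    unfolding comonotone_def
  proof (intro allI impI)
    fix x1 u1 x2 u2 assume "u1 \<in> B x1" "u2 \<in> B x2"
    then consider "u1 \<in> A x1" "u2 \<in> A x2" | "x1 = p" "u1 = u" "u2 \<in> A x2"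
      | "x2 = p" "u2 = u" "u1 \<in> A x1" | "x1 = p" "u1 = u" "x2 = p" "u2 = u"
      by (auto simp: B_def split: if_splits)
    then show "\<rho> * (norm (u1 - u2))\<^sup>2 \<le> inner (x1 - x2) (u1 - u2)"
    proof cases
      case 3
      then show ?thesis
        using related[of u1 x1]
        by (simp add: norm_minus_commute inner_diff_left inner_diff_right inner_commute)
    qed (use comonotoneD[OF \<open>comonotone \<rho> A\<close>] related in auto)
  qed
  moreover have "graph A \<subseteq> graph B" by (auto simp: graph_def B_def)
  ultimately have "graph B = graph A" using max by (simp add: max_comonotone_def)
  moreover have "(p, u) \<in> graph B" by (simp add: graph_def B_def)
  ultimately show ?thesis by (simp add: graph_def)
qed

lemma comonotone_imp_monotone_graph_inverse_shift:
  assumes "comonotone \<rho> A" "0 < c"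
  shows "monotone_graph {(v, (1 / c) *\<^sub>R (y - \<rho> *\<^sub>R v - z)) | y v. v \<in> A y}"
  unfolding monotone_graph_def
proof clarify
  fix y1 v1 y2 v2 assume "v1 \<in> A y1" "v2 \<in> A y2"
  then have "0 \<le> inner (v1 - v2) (y1 - y2) - \<rho> * inner (v1 - v2) (v1 - v2)"
    using comonotoneD[OF assms(1)] by (simp add: inner_commute power2_norm_eq_inner)
  moreover have "(1 / c) *\<^sub>R (y1 - \<rho> *\<^sub>R v1 - z) - (1 / c) *\<^sub>R (y2 - \<rho> *\<^sub>R v2 - z)
      = (1 / c) *\<^sub>R ((y1 - y2) - \<rho> *\<^sub>R (v1 - v2))"
    by (simp add: algebra_simps)
  ultimately show "0 \<le> inner (v1 - v2)
      ((1 / c) *\<^sub>R (y1 - \<rho> *\<^sub>R v1 - z) - (1 / c) *\<^sub>R (y2 - \<rho> *\<^sub>R v2 - z))"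
    using \<open>0 < c\<close> by (simp add: inner_diff_right)
qed

lemma max_comonotone_resolvent_exists:
  fixes A :: "'a::{real_inner, complete_space} \<Rightarrow> 'a set"
  assumes max: "max_comonotone \<rho> A" and "0 < \<eta> + \<rho>"
  shows "\<exists>p u. u \<in> A p \<and> z = p + \<eta> *\<^sub>R u"
proof -
  define c where "c = \<eta> + \<rho>"
  have "0 < c" using assms(2) by (simp add: c_def)
  define G where "G = {(v, (1 / c) *\<^sub>R (y - \<rho> *\<^sub>R v - z)) | y v. v \<in> A y}"
  have "comonotone \<rho> A" using max by (simp add: max_comonotone_def)
  then have "monotone_graph G"
    unfolding G_def using \<open>0 < c\<close> by (rule comonotone_imp_monotone_graph_inverse_shift)
  \<comment> \<open>A Debrunner--Flor point u of G makes (z - \<eta> u, u) comonotonically related to graph A.\<close>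
  then obtain u where u: "\<forall>(a, b)\<in>G. inner (u - a) (u + b) \<le> 0"
    using debrunner_flor by blast
  define p where "p = z - \<eta> *\<^sub>R u"
  have "\<rho> * (norm (u - v))\<^sup>2 \<le> inner (p - y) (u - v)" if "v \<in> A y" for y v
  proof -
    have "inner (u - v) (u + (1 / c) *\<^sub>R (y - \<rho> *\<^sub>R v - z)) \<le> 0"
      using u that by (auto simp: G_def)
    moreover have "c *\<^sub>R u + (y - \<rho> *\<^sub>R v - z) = c *\<^sub>R (u + (1 / c) *\<^sub>R (y - \<rho> *\<^sub>R v - z))"
      using \<open>0 < c\<close> by (simp add: scaleR_add_right)
    ultimately have "inner (u - v) (c *\<^sub>R u + (y - \<rho> *\<^sub>R v - z)) \<le> 0"
      using \<open>0 < c\<close> by (simp add: mult_nonneg_nonpos)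
    moreover have "c *\<^sub>R u + (y - \<rho> *\<^sub>R v - z) = \<rho> *\<^sub>R (u - v) - (p - y)"
      by (simp add: c_def p_def algebra_simps)
    ultimately show ?thesis
      by (simp add: inner_diff_right power2_norm_eq_inner inner_commute)
  qed
  then have "u \<in> A p" by (rule max_comonotone_mem_if_related[OF max])
  then show ?thesis by (intro exI[of _ p] exI[of _ u]) (simp add: p_def)
qed

lemma comonotone_resolvent_unique:
  assumes com: "comonotone \<rho> A" and "0 < \<eta> + \<rho>"
    and "u \<in> A p" "w \<in> A q" and eq: "p + \<eta> *\<^sub>R u = q + \<eta> *\<^sub>R w"
  shows "p = q"
proof -
  have pq: "p - q = \<eta> *\<^sub>R (w - u)" using eq by (simp add: algebra_simps)
  have "\<rho> * (norm (u - w))\<^sup>2 \<le> inner (p - q) (u - w)"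
    using comonotoneD[OF com \<open>u \<in> A p\<close> \<open>w \<in> A q\<close>] .
  also have "\<dots> = - \<eta> * (norm (u - w))\<^sup>2"
    unfolding pq
    by (simp add: power2_norm_eq_inner inner_diff_left inner_diff_right inner_commute algebra_simps)
  finally have "(\<eta> + \<rho>) * (norm (u - w))\<^sup>2 \<le> 0" by (simp add: algebra_simps)
  then have "u = w" using \<open>0 < \<eta> + \<rho>\<close> by (simp add: mult_le_0_iff)
  then show ?thesis using pq by simp
qed

lemma max_comonotone_resolvent:
  fixes A :: "'a::{real_inner, complete_space} \<Rightarrow> 'a set"
  assumes max: "max_comonotone \<rho> A" and "0 < \<eta> + \<rho>"
  shows "\<exists>u\<in>A (resolvent A \<eta> z). z = resolvent A \<eta> z + \<eta> *\<^sub>R u"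
proof -
  have com: "comonotone \<rho> A" using max by (simp add: max_comonotone_def)
  have "\<exists>!p. z \<in> (\<lambda>u. p + \<eta> *\<^sub>R u) ` A p"
  proof (rule ex_ex1I)
    show "\<exists>p. z \<in> (\<lambda>u. p + \<eta> *\<^sub>R u) ` A p"
      using max_comonotone_resolvent_exists[OF assms, of z] by blast
    show "p = q" if "z \<in> (\<lambda>u. p + \<eta> *\<^sub>R u) ` A p" "z \<in> (\<lambda>u. q + \<eta> *\<^sub>R u) ` A q" for p q
      using that comonotone_resolvent_unique[OF com \<open>0 < \<eta> + \<rho>\<close>] by force
  qed
  then have "z \<in> (\<lambda>u. resolvent A \<eta> z + \<eta> *\<^sub>R u) ` A (resolvent A \<eta> z)"
    unfolding resolvent_def by (rule theI')
  then show ?thesis by auto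
qed

lemma max_comonotone_yosida:
  fixes A :: "'a::{real_inner, complete_space} \<Rightarrow> 'a set"
  assumes "max_comonotone \<rho> A" "0 < \<eta>" "0 < \<eta> + \<rho>"
  shows "yosida A \<eta> z \<in> A (resolvent A \<eta> z)" and "z = resolvent A \<eta> z + \<eta> *\<^sub>R yosida A \<eta> z"
proof -
  obtain u where u: "u \<in> A (resolvent A \<eta> z)" "z = resolvent A \<eta> z + \<eta> *\<^sub>R u"
    using max_comonotone_resolvent[OF assms(1,3)] by blast
  then have "z - resolvent A \<eta> z = \<eta> *\<^sub>R u" by (metis add_diff_cancel_left')
  then have "yosida A \<eta> z = u"
    using \<open>0 < \<eta>\<close> by (simp add: yosida_def)
  with u show "yosida A \<eta> z \<in> A (resolvent A \<eta> z)" "z = resolvent A \<eta> z + \<eta> *\<^sub>R yosida A \<eta> z"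
    by simp_all
qed

lemma yosida_cocoercive:
  fixes A :: "'a::{real_inner, complete_space} \<Rightarrow> 'a set"
  assumes max: "max_comonotone \<rho> A" and "0 < \<eta>" "0 < \<eta> + \<rho>"
  shows "(\<eta> + \<rho>) * (norm (yosida A \<eta> z1 - yosida A \<eta> z2))\<^sup>2
    \<le> inner (z1 - z2) (yosida A \<eta> z1 - yosida A \<eta> z2)"
proof -
  let ?J = "resolvent A \<eta>" and ?Y = "yosida A \<eta>"
  have com: "comonotone \<rho> A" using max by (simp add: max_comonotone_def)
  note Y = max_comonotone_yosida[OF assms]
  have "z1 - z2 = (?J z1 - ?J z2) + \<eta> *\<^sub>R (?Y z1 - ?Y z2)"
    using Y(2)[of z1] Y(2)[of z2] by (simp add: algebra_simps)
  then have "inner (z1 - z2) (?Y z1 - ?Y z2)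
      = inner (?J z1 - ?J z2) (?Y z1 - ?Y z2) + \<eta> * (norm (?Y z1 - ?Y z2))\<^sup>2"
    by (simp add: inner_add_left power2_norm_eq_inner)
  moreover have "\<rho> * (norm (?Y z1 - ?Y z2))\<^sup>2 \<le> inner (?J z1 - ?J z2) (?Y z1 - ?Y z2)"
    using comonotoneD[OF com Y(1) Y(1)] .
  ultimately show ?thesis by (simp add: algebra_simps)
qed

lemma yosida_monotone:
  fixes A :: "'a::{real_inner, complete_space} \<Rightarrow> 'a set"
  assumes "max_comonotone \<rho> A" "0 < \<eta>" "0 < \<eta> + \<rho>"
  shows "0 \<le> inner (z1 - z2) (yosida A \<eta> z1 - yosida A \<eta> z2)"
  using yosida_cocoercive[OF assms, of z1 z2] \<open>0 < \<eta> + \<rho>\<close>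
  by (meson order_trans less_imp_le mult_nonneg_nonneg zero_le_power2)

lemma has_vector_derivative_imp_quotient_tendsto:
  assumes "(f has_vector_derivative D) (at x within S)"
  shows "((\<lambda>y. (f y - f x) /\<^sub>R (y - x)) \<longlongrightarrow> D) (at x within S)"
proof -
  have quotient:
    "norm (f y - f x - (y - x) *\<^sub>R D) / norm (y - x) = norm ((f y - f x) /\<^sub>R (y - x) - D)"
    if "y \<noteq> x" for y
  proof -
    have "(f y - f x) /\<^sub>R (y - x) - D = (f y - f x - (y - x) *\<^sub>R D) /\<^sub>R (y - x)"
      using that by (simp add: scaleR_diff_right)
    then show ?thesis by (simp add: divide_inverse mult.commute)
  qed
  have "((\<lambda>y. norm (f y - f x - (y - x) *\<^sub>R D) / norm (y - x)) \<longlongrightarrow> 0) (at x within S)"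
    using assms by (simp add: has_vector_derivative_def has_derivative_iff_norm)
  also have "?this \<longleftrightarrow> ((\<lambda>y. norm ((f y - f x) /\<^sub>R (y - x) - D)) \<longlongrightarrow> 0) (at x within S)"
    by (rule Lim_cong_within) (simp_all add: quotient del: real_norm_def)
  finally show ?thesis by (simp only: tendsto_norm_zero_iff LIM_zero_iff)
qed

lemma inner_vector_derivative_nonneg:
  fixes f g :: "real \<Rightarrow> 'a::real_inner"
  assumes "(f has_vector_derivative f') (at t)" and "(g has_vector_derivative g') (at t)"
    and "\<forall>\<^sub>F s in at t. 0 \<le> inner (f s - f t) (g s - g t)"
  shows "0 \<le> inner f' g'"
proof (rule tendsto_lowerbound)
  show "((\<lambda>s. inner ((f s - f t) /\<^sub>R (s - t)) ((g s - g t) /\<^sub>R (s - t))) \<longlongrightarrow> inner f' g') (at t)"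
    using assms(1,2) by (intro tendsto_inner has_vector_derivative_imp_quotient_tendsto)
  show "\<forall>\<^sub>F s in at t. 0 \<le> inner ((f s - f t) /\<^sub>R (s - t)) ((g s - g t) /\<^sub>R (s - t))"
    using assms(3) by eventually_elim (simp add: mult.assoc[symmetric] del: mult.assoc)
qed simp

theorem mainTheorem1:
  fixes A :: "'a::{real_inner, complete_space} \<Rightarrow> 'a set"
    and \<rho> \<eta> :: real and I :: "real set"
    and x x' y' :: "real \<Rightarrow> 'a"
  assumes "max_comonotone \<rho> A"
    and "\<eta> > max (- 2 * \<rho>) 0"
    and "is_interval I" and "open I"
    and "\<And>t. t \<in> I \<Longrightarrow> (x has_vector_derivative x' t) (at t)"
    and "\<And>t. t \<in> I \<Longrightarrow> ((\<lambda>s. yosida A \<eta> (x s)) has_vector_derivative y' t) (at t)"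
    and "t \<in> I"
  shows "inner (x' t) (y' t) \<ge> 0"
proof (rule inner_vector_derivative_nonneg)
  show "(x has_vector_derivative x' t) (at t)"
    and "((\<lambda>s. yosida A \<eta> (x s)) has_vector_derivative y' t) (at t)"
    using assms(5,6) \<open>t \<in> I\<close> by blast+
  have "0 < \<eta>" "0 < \<eta> + \<rho>" using assms(2) by auto
  then show "\<forall>\<^sub>F s in at t. 0 \<le> inner (x s - x t) (yosida A \<eta> (x s) - yosida A \<eta> (x t))"
    using yosida_monotone[OF assms(1)] by (simp add: always_eventually)
qed

end
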